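(* Let $X:\mathbb{N}\to\mathbf{Set}_*$ be a tower of pointed sets. Then the functors $G(X,-),H(X,-):\mathbf{Ab}\to\mathbf{Ab}$ are left exact. If moreover $X$ satisfies the Mittag-Leffler condition, then $G(X,-)$ and $H(X,-)$ are exact.
   Context: $\mathbb{N}$ is regarded as a category with a single morphism $n\to m$ whenever $n\ge m$; $\phi_{n,m}:X(n)\to X(m)$ are the structure maps. For a pointed set $Y$, $Y\wedge A:=\bigoplus_{Y\setminus\{*\}}A$ (finitely supported pointed maps $Y\to A$), functorial in $Y$ via $f_*(sv)=f(s)v$ and in $A$ coordinatewise, where $sv$ is the element with value $v$ at $s$ ($*v=0$). $G(X,A):=\lim_\mathbb{N}(X\wedge A)$; $K(X,A)$ is the image of the injective natural map $\rho:(\lim_\mathbb{N}X)\wedge A\to G(X,A)$, $\rho(xv)(n)=x(n)v$; $H(X,A):=G(X,A)/K(X,A)$. $X$ satisfies the Mittag-Leffler condition if for every $n$ there is $s\ge n$ such that $\mathrm{Im}(X(s)\to X(n))=\mathrm{Im}(X(r)\to X(n))$ for all $r\ge s$. *)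

theory Defs
  imports Main
begin

text \<open>Level n is the set X n (inside an
  ambient type 'x) with base point pt n; phi n m : X n -> X m is the structure map
  for n >= m.\<close>

definition tower :: "(nat \<Rightarrow> 'x set) \<Rightarrow> (nat \<Rightarrow> 'x) \<Rightarrow> (nat \<Rightarrow> nat \<Rightarrow> 'x \<Rightarrow> 'x) \<Rightarrow> bool" where
  "tower X pt phi \<longleftrightarrow>
     (\<forall>n. pt n \<in> X n) \<and>
     (\<forall>n m. m \<le> n \<longrightarrow> (\<forall>x\<in>X n. phi n m x \<in> X m) \<and> phi n m (pt n) = pt m) \<and>
     (\<forall>n. \<forall>x\<in>X n. phi n n x = x) \<and>
     (\<forall>n m k. k \<le> m \<longrightarrow> m \<le> n \<longrightarrow> (\<forall>x\<in>X n. phi m k (phi n m x) = phi n k x))"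

definition mittag_leffler :: "(nat \<Rightarrow> 'x set) \<Rightarrow> (nat \<Rightarrow> nat \<Rightarrow> 'x \<Rightarrow> 'x) \<Rightarrow> bool" where
  "mittag_leffler X phi \<longleftrightarrow>
     (\<forall>n. \<exists>s\<ge>n. \<forall>r\<ge>s. phi s n ` X s = phi r n ` X r)"

text \<open>Y smash A for a pointed set (Y, y0) and an abelian group A (the type 'a):
  finitely supported pointed maps Y -> A, i.e. functions vanishing outside Y - {y0}
  with finite support.\<close>

definition smash :: "'y set \<Rightarrow> 'y \<Rightarrow> ('y \<Rightarrow> 'a::ab_group_add) set" where
  "smash Y y0 = {v. finite {y. v y \<noteq> 0} \<and> (\<forall>y. v y \<noteq> 0 \<longrightarrow> y \<in> Y \<and> y \<noteq> y0)}"

text \<open>Functoriality in Y: f_*(s v) = f(s) v, extended additively; z0 is the base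
  point of the target (where everything becomes 0).\<close>

definition smash_map :: "('y \<Rightarrow> 'z) \<Rightarrow> 'z \<Rightarrow> ('y \<Rightarrow> 'a::ab_group_add) \<Rightarrow> ('z \<Rightarrow> 'a)" where
  "smash_map f z0 v = (\<lambda>t. if t = z0 then 0 else sum v {s. v s \<noteq> 0 \<and> f s = t})"

text \<open>G(X,A) = lim_N (X smash A), as compatible sequences.\<close>

definition Gset :: "(nat \<Rightarrow> 'x set) \<Rightarrow> (nat \<Rightarrow> 'x) \<Rightarrow> (nat \<Rightarrow> nat \<Rightarrow> 'x \<Rightarrow> 'x)
    \<Rightarrow> (nat \<Rightarrow> 'x \<Rightarrow> 'a::ab_group_add) set" where
  "Gset X pt phi = {g. (\<forall>n. g n \<in> smash (X n) (pt n)) \<and>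
       (\<forall>n m. m \<le> n \<longrightarrow> smash_map (phi n m) (pt m) (g n) = g m)}"

definition Gmap :: "('a \<Rightarrow> 'b) \<Rightarrow> (nat \<Rightarrow> 'x \<Rightarrow> 'a) \<Rightarrow> (nat \<Rightarrow> 'x \<Rightarrow> 'b)" where
  "Gmap h g = (\<lambda>n y. h (g n y))"

definition limX :: "(nat \<Rightarrow> 'x set) \<Rightarrow> (nat \<Rightarrow> nat \<Rightarrow> 'x \<Rightarrow> 'x) \<Rightarrow> (nat \<Rightarrow> 'x) set" where
  "limX X phi = {x. (\<forall>n. x n \<in> X n) \<and> (\<forall>n m. m \<le> n \<longrightarrow> phi n m (x n) = x m)}"

text \<open>rho : (lim X) smash A -> G(X,A), rho(x v)(n) = x(n) v (extended additively),
  i.e. the pushforward along the projection lim X -> X n.\<close>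

definition rho :: "(nat \<Rightarrow> 'x) \<Rightarrow> ((nat \<Rightarrow> 'x) \<Rightarrow> 'a::ab_group_add) \<Rightarrow> (nat \<Rightarrow> 'x \<Rightarrow> 'a)" where
  "rho pt v = (\<lambda>n. smash_map (\<lambda>x. x n) (pt n) v)"

definition Kset :: "(nat \<Rightarrow> 'x set) \<Rightarrow> (nat \<Rightarrow> 'x) \<Rightarrow> (nat \<Rightarrow> nat \<Rightarrow> 'x \<Rightarrow> 'x)
    \<Rightarrow> (nat \<Rightarrow> 'x \<Rightarrow> 'a::ab_group_add) set" where
  "Kset X pt phi = rho pt ` smash (limX X phi) pt"

text \<open>H(X,A) = G(X,A)/K(X,A), realised as the set of cosets g + K.\<close>

definition coset :: "(nat \<Rightarrow> 'x \<Rightarrow> 'a::ab_group_add) set \<Rightarrow> (nat \<Rightarrow> 'x \<Rightarrow> 'a) \<Rightarrow> (nat \<Rightarrow> 'x \<Rightarrow> 'a) set" where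
  "coset K g = {(\<lambda>n y. g n y + k n y) | k. k \<in> K}"

definition Hset :: "(nat \<Rightarrow> 'x set) \<Rightarrow> (nat \<Rightarrow> 'x) \<Rightarrow> (nat \<Rightarrow> nat \<Rightarrow> 'x \<Rightarrow> 'x)
    \<Rightarrow> (nat \<Rightarrow> 'x \<Rightarrow> 'a::ab_group_add) set set" where
  "Hset X pt phi = coset (Kset X pt phi) ` Gset X pt phi"

definition Hmap :: "(nat \<Rightarrow> 'x set) \<Rightarrow> (nat \<Rightarrow> 'x) \<Rightarrow> (nat \<Rightarrow> nat \<Rightarrow> 'x \<Rightarrow> 'x)
    \<Rightarrow> ('a::ab_group_add \<Rightarrow> 'b::ab_group_add) \<Rightarrow> (nat \<Rightarrow> 'x \<Rightarrow> 'a) set \<Rightarrow> (nat \<Rightarrow> 'x \<Rightarrow> 'b) set" where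
  "Hmap X pt phi h c = coset (Kset X pt phi) (Gmap h (SOME g. g \<in> c))"

definition additive :: "('a::ab_group_add \<Rightarrow> 'b::ab_group_add) \<Rightarrow> bool" where
  "additive h \<longleftrightarrow> (\<forall>x y. h (x + y) = h x + h y)"

text \<open>Exactness of C0 --f--> C1 --g--> C2 for maps between pointed carriers
  (zero of C2 is z2): im f = ker g.\<close>

definition exact_at :: "'p set \<Rightarrow> 'q set \<Rightarrow> 'r \<Rightarrow> ('p \<Rightarrow> 'q) \<Rightarrow> ('q \<Rightarrow> 'r) \<Rightarrow> bool" where
  "exact_at C0 C1 z2 f g \<longleftrightarrow> {b \<in> C1. g b = z2} = f ` C0"

end

theory Submission
  imports Defs
begin

text \<open>
  Left exactness of G(X,-) is checked levelwise, where each X n \<and> - is exact. For H(X,-) one needs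
  in addition that an element of K all of whose values lie in the image of an additive map h lifts
  to K along h. This holds because an element of (lim X) \<and> A can be read off from its image at a
  single level: finitely many points of lim X are already separated at some level.

  For surjectivity, fix c \<in> G(X,C). The lifts of c n to X n \<and> B form a tower of nonempty sets,
  each a coset of X n \<and> A. Consequently the images of the level-r lifts at level n differ by the
  image of X r \<and> A, which by the Mittag-Leffler condition no longer shrinks for large r. A tower of
  nonempty sets whose images stabilise has nonempty limit, and a point of it is a lift of c in
  G(X,B). Surjectivity of H(X,-) follows from that of G(X,-).
\<close>

section \<open>Smash products with abelian groups\<close>

lemma additive_0: "additive h \<Longrightarrow> h 0 = 0"
  unfolding additive_def by (metis add_cancel_right_right)

lemma additive_diff: "additive h \<Longrightarrow> h (x - y) = h x - h y"
  unfolding additive_def by (metis add_diff_cancel diff_add_cancel)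

lemma additive_sum: "additive h \<Longrightarrow> h (sum v F) = (\<Sum>s\<in>F. h (v s))"
  using sum_comp_morphism[of h v F] additive_0[of h] unfolding additive_def by (simp add: o_def)

lemma smash_finite: "v \<in> smash Y y0 \<Longrightarrow> finite {s. v s \<noteq> 0}"
  unfolding smash_def by auto

lemma smash_supportD: "v \<in> smash Y y0 \<Longrightarrow> v y \<noteq> 0 \<Longrightarrow> y \<in> Y \<and> y \<noteq> y0"
  unfolding smash_def by blast

lemma smash_zero: "(\<lambda>y. 0) \<in> smash Y y0"
  unfolding smash_def by simp

lemma smash_support_subset:
  assumes "v \<in> smash Y y0" "v' \<in> smash Y y0" "\<And>y. w y \<noteq> 0 \<Longrightarrow> v y \<noteq> 0 \<or> v' y \<noteq> 0"
  shows "w \<in> smash Y y0"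
proof -
  have "{y. w y \<noteq> 0} \<subseteq> {y. v y \<noteq> 0} \<union> {y. v' y \<noteq> 0}"
    using assms(3) by blast
  moreover have "finite ({y. v y \<noteq> 0} \<union> {y. v' y \<noteq> 0})"
    using assms(1,2) by (simp add: smash_finite)
  ultimately show ?thesis
    using assms unfolding smash_def by (auto intro: finite_subset)
qed

lemma smash_add:
  assumes "v \<in> smash Y y0" "w \<in> smash Y y0"
  shows "(\<lambda>y. v y + w y) \<in> smash Y y0"
  by (rule smash_support_subset[OF assms]) auto

lemma smash_diff:
  assumes "v \<in> smash Y y0" "w \<in> smash Y y0"
  shows "(\<lambda>y. v y - w y) \<in> smash Y y0"
  by (rule smash_support_subset[OF assms]) auto

lemma smash_additive_comp:
  assumes "additive h" "v \<in> smash Y y0"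
  shows "(\<lambda>y. h (v y)) \<in> smash Y y0"
  by (rule smash_support_subset[OF assms(2) assms(2)]) (auto simp: additive_0[OF assms(1)])

lemma smash_map_eq_sum:
  assumes "finite F" "{s. v s \<noteq> 0} \<subseteq> F"
  shows "smash_map f z0 v t = (if t = z0 then 0 else (\<Sum>s\<in>{s\<in>F. f s = t}. v s))"
proof -
  have "sum v {s. v s \<noteq> 0 \<and> f s = t} = sum v {s\<in>F. f s = t}"
    by (rule sum.mono_neutral_left) (use assms in auto)
  then show ?thesis unfolding smash_map_def by simp
qed

lemma smash_map_support:
  assumes "smash_map f z0 v t \<noteq> 0"
  shows "t \<noteq> z0 \<and> (\<exists>s. v s \<noteq> 0 \<and> f s = t)"
proof -
  have "t \<noteq> z0" and sum: "sum v {s. v s \<noteq> 0 \<and> f s = t} \<noteq> 0"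
    using assms unfolding smash_map_def by (auto split: if_splits)
  moreover have "{s. v s \<noteq> 0 \<and> f s = t} \<noteq> {}"
    using sum by (metis sum.empty)
  ultimately show ?thesis by blast
qed

lemma smash_map_in_smash:
  assumes "finite {s. v s \<noteq> 0}" "\<And>s. v s \<noteq> 0 \<Longrightarrow> f s \<in> Z"
  shows "smash_map f z0 v \<in> smash Z z0"
proof -
  have supp: "t \<in> f ` {s. v s \<noteq> 0} \<and> t \<in> Z \<and> t \<noteq> z0" if "smash_map f z0 v t \<noteq> 0" for t
    using smash_map_support[OF that] assms(2) by blast
  then have "{t. smash_map f z0 v t \<noteq> 0} \<subseteq> f ` {s. v s \<noteq> 0}"
    by blast
  then have "finite {t. smash_map f z0 v t \<noteq> 0}"
    using assms(1) by (rule finite_subset[OF _ finite_imageI])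
  then show ?thesis
    unfolding smash_def using supp by blast
qed

lemma smash_map_add:
  assumes "finite {s. v s \<noteq> 0}" "finite {s. w s \<noteq> 0}"
  shows "smash_map f z0 (\<lambda>s. v s + w s) t = smash_map f z0 v t + smash_map f z0 w t"
proof -
  let ?F = "{s. v s \<noteq> 0} \<union> {s. w s \<noteq> 0}"
  have F: "finite ?F" using assms by simp
  have sub: "{s. v s + w s \<noteq> 0} \<subseteq> ?F" by auto
  show ?thesis
    unfolding smash_map_eq_sum[OF F sub] smash_map_eq_sum[OF F Un_upper1]
      smash_map_eq_sum[OF F Un_upper2]
    by (simp add: sum.distrib)
qed

lemma smash_map_diff:
  assumes "finite {s. v s \<noteq> 0}" "finite {s. w s \<noteq> 0}"
  shows "smash_map f z0 (\<lambda>s. v s - w s) t = smash_map f z0 v t - smash_map f z0 w t"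
proof -
  let ?F = "{s. v s \<noteq> 0} \<union> {s. w s \<noteq> 0}"
  have F: "finite ?F" using assms by simp
  have sub: "{s. v s - w s \<noteq> 0} \<subseteq> ?F" by auto
  show ?thesis
    unfolding smash_map_eq_sum[OF F sub] smash_map_eq_sum[OF F Un_upper1]
      smash_map_eq_sum[OF F Un_upper2]
    by (simp add: sum_subtractf)
qed

lemma additive_smash_map:
  assumes "additive h" "finite {s. v s \<noteq> 0}"
  shows "h (smash_map f z0 v t) = smash_map f z0 (\<lambda>s. h (v s)) t"
proof -
  have "{s. h (v s) \<noteq> 0} \<subseteq> {s. v s \<noteq> 0}"
    using additive_0[OF assms(1)] by auto
  then show ?thesis
    using smash_map_eq_sum[OF assms(2), of "\<lambda>s. h (v s)" f z0 t]
      smash_map_eq_sum[OF assms(2) order_refl, of f z0 t]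
    by (simp add: additive_0[OF assms(1)] additive_sum[OF assms(1)])
qed

lemma smash_map_comp:
  assumes v: "finite {s. v s \<noteq> 0}" and "g z0 = z1" and gf: "\<And>s. v s \<noteq> 0 \<Longrightarrow> g (f s) = h s"
  shows "smash_map g z1 (smash_map f z0 v) = smash_map h z1 v"
proof
  fix u
  let ?F = "{s. v s \<noteq> 0}"
  let ?w = "smash_map f z0 v"
  have "{t. ?w t \<noteq> 0} \<subseteq> f ` ?F"
    using smash_map_support[of f z0 v] by blast
  note w_eq = smash_map_eq_sum[OF finite_imageI[OF v] this]
  show "smash_map g z1 ?w u = smash_map h z1 v u"
  proof (cases "u = z1")
    case False
    have "smash_map g z1 ?w u = (\<Sum>t\<in>{t\<in>f ` ?F. g t = u}. ?w t)"
      using w_eq[of g z1 u] False by simp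
    also have "\<dots> = (\<Sum>t\<in>{t\<in>f ` ?F. g t = u}. \<Sum>s\<in>{s\<in>{s\<in>?F. h s = u}. f s = t}. v s)"
    proof (rule sum.cong[OF refl])
      fix t assume t: "t \<in> {t\<in>f ` ?F. g t = u}"
      then have "t \<noteq> z0" using False assms(2) by auto
      moreover have "{s\<in>?F. f s = t} = {s\<in>{s\<in>?F. h s = u}. f s = t}"
        using t gf by auto metis
      ultimately show "?w t = (\<Sum>s\<in>{s\<in>{s\<in>?F. h s = u}. f s = t}. v s)"
        using smash_map_eq_sum[OF v order_refl, of f z0 t] by simp
    qed
    also have "\<dots> = (\<Sum>s\<in>{s\<in>?F. h s = u}. v s)"
      by (rule sum.group) (use v gf in auto)
    also have "\<dots> = smash_map h z1 v u"
      using smash_map_eq_sum[OF v order_refl, of h z1 u] False by simp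
    finally show ?thesis .
  qed (simp add: smash_map_def)
qed

lemma smash_map_id:
  assumes "finite {s. v s \<noteq> 0}" "v z0 = 0" "\<And>s. v s \<noteq> 0 \<Longrightarrow> f s = s"
  shows "smash_map f z0 v = v"
proof
  fix t
  have e: "{s. v s \<noteq> 0 \<and> f s = t} = (if v t = 0 then {} else {t})"
    using assms(3) by auto
  show "smash_map f z0 v t = v t"
  proof (cases "t = z0")
    case False
    then show ?thesis unfolding smash_map_def e by simp
  qed (simp add: smash_map_def assms(2))
qed

lemma smash_map_lift:
  assumes "f y0 = z0" and d: "d \<in> smash Z z0" and im: "\<And>t. d t \<noteq> 0 \<Longrightarrow> t \<in> f ` Y"
  shows "\<exists>a\<in>smash Y y0. smash_map f z0 a = d"
proof -
  let ?\<sigma> = "inv_into Y f"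
  have \<sigma>: "?\<sigma> t \<in> Y" "f (?\<sigma> t) = t" if "d t \<noteq> 0" for t
    using im[OF that] by (auto intro: inv_into_into f_inv_into_f)
  have a: "smash_map ?\<sigma> y0 d \<in> smash Y y0"
    by (rule smash_map_in_smash[OF smash_finite[OF d]]) (use \<sigma> in blast)
  have "smash_map f z0 (smash_map ?\<sigma> y0 d) = smash_map (\<lambda>t. f (?\<sigma> t)) z0 d"
    by (rule smash_map_comp[OF smash_finite[OF d]]) (use assms(1) in simp_all)
  also have "\<dots> = d"
  proof (rule smash_map_id[OF smash_finite[OF d]])
    show "d z0 = 0" using smash_supportD[OF d] by blast
  qed (rule \<sigma>(2))
  finally show ?thesis using a by blast
qed

lemma smash_map_add_additive:
  assumes h: "additive h" and v: "finite {s. v s \<noteq> 0}" and w: "finite {s. w s \<noteq> 0}"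
  shows "smash_map f z0 (\<lambda>s. v s + h (w s)) = (\<lambda>t. smash_map f z0 v t + h (smash_map f z0 w t))"
proof
  fix t
  have "{s. h (w s) \<noteq> 0} \<subseteq> {s. w s \<noteq> 0}"
    using additive_0[OF h] by auto
  then have hw: "finite {s. h (w s) \<noteq> 0}"
    using w by (rule finite_subset)
  show "smash_map f z0 (\<lambda>s. v s + h (w s)) t = smash_map f z0 v t + h (smash_map f z0 w t)"
    using smash_map_add[OF v hw, of f z0 t] additive_smash_map[OF h w, of f z0 t] by simp
qed

definition smash_lifts ::
    "'y set \<Rightarrow> 'y \<Rightarrow> ('b::ab_group_add \<Rightarrow> 'c::ab_group_add) \<Rightarrow> ('y \<Rightarrow> 'c) \<Rightarrow> ('y \<Rightarrow> 'b) set" where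
  "smash_lifts Y y0 g c = {b \<in> smash Y y0. \<forall>y. g (b y) = c y}"

lemma smash_lifts_nonempty:
  assumes g: "additive g" "surj g" and c: "c \<in> smash Y y0"
  shows "smash_lifts Y y0 g c \<noteq> {}"
proof -
  define b where "b y = (if c y = 0 then 0 else inv g (c y))" for y
  have "g (b y) = c y" for y
    unfolding b_def using g by (simp add: additive_0 surj_f_inv_f)
  moreover have "b \<in> smash Y y0"
    by (rule smash_support_subset[OF c c]) (simp add: b_def split: if_splits)
  ultimately show ?thesis
    unfolding smash_lifts_def by blast
qed

lemma smash_lifts_diff:
  assumes f: "additive f" "inj f" and g: "additive g" and ex: "{b. g b = 0} = range f"
    and b: "b \<in> smash_lifts Y y0 g c" and b': "b' \<in> smash_lifts Y y0 g c"
  obtains a where "a \<in> smash Y y0" "b = (\<lambda>y. b' y + f (a y))"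
proof -
  have smash: "b \<in> smash Y y0" "b' \<in> smash Y y0" and lift: "g (b y) = c y" "g (b' y) = c y" for y
    using b b' unfolding smash_lifts_def by auto
  have diff_in_range: "b y - b' y \<in> range f" for y
    using ex lift additive_diff[OF g] by auto
  define a where "a y = inv f (b y - b' y)" for y
  have fa: "f (a y) = b y - b' y" for y
    unfolding a_def using diff_in_range by (simp add: f_inv_into_f)
  have "a y = 0" if "b y = 0" "b' y = 0" for y
    using fa[of y] that additive_0[OF f(1)] f(2) by (metis diff_self injD)
  then have "a \<in> smash Y y0"
    using smash_support_subset[OF smash] by blast
  moreover have "b = (\<lambda>y. b' y + f (a y))"
    using fa by simp
  ultimately show ?thesis by (rule that)
qed

lemma smash_lifts_translate:
  assumes f: "additive f" and gf: "\<And>x. g (f x) = 0" and g: "additive g"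
    and b: "b \<in> smash_lifts Y y0 g c" and a: "a \<in> smash Y y0"
  shows "(\<lambda>y. b y + f (a y)) \<in> smash_lifts Y y0 g c"
  using b smash_add[OF _ smash_additive_comp[OF f a]] gf g
  unfolding smash_lifts_def additive_def by auto

lemma smash_map_lifts:
  assumes g: "additive g" and b: "b \<in> smash_lifts Y y0 g c" and \<phi>: "\<And>y. y \<in> Y \<Longrightarrow> \<phi> y \<in> Z"
  shows "smash_map \<phi> z0 b \<in> smash_lifts Z z0 g (smash_map \<phi> z0 c)"
proof -
  have smash: "b \<in> smash Y y0" and lift: "(\<lambda>y. g (b y)) = c"
    using b unfolding smash_lifts_def by auto
  have "smash_map \<phi> z0 b \<in> smash Z z0"
    by (rule smash_map_in_smash[OF smash_finite[OF smash]]) (use \<phi> smash_supportD[OF smash] in blast)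
  moreover have "g (smash_map \<phi> z0 b t) = smash_map \<phi> z0 c t" for t
    using additive_smash_map[OF g smash_finite[OF smash]] lift by simp
  ultimately show ?thesis
    unfolding smash_lifts_def by blast
qed

section \<open>The functors G and H\<close>

lemma GsetI:
  assumes "\<And>n. a n \<in> smash (X n) (pt n)"
    and "\<And>n m. m \<le> n \<Longrightarrow> smash_map (phi n m) (pt m) (a n) = a m"
  shows "a \<in> Gset X pt phi"
  unfolding Gset_def using assms by blast

lemma Gset_smash: "a \<in> Gset X pt phi \<Longrightarrow> a n \<in> smash (X n) (pt n)"
  unfolding Gset_def by blast

lemma Gset_compatible: "a \<in> Gset X pt phi \<Longrightarrow> m \<le> n \<Longrightarrow> smash_map (phi n m) (pt m) (a n) = a m"
  unfolding Gset_def by blast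

lemma Gset_diff:
  assumes a: "a \<in> Gset X pt phi" and b: "b \<in> Gset X pt phi"
  shows "(\<lambda>n y. a n y - b n y) \<in> Gset X pt phi"
proof (rule GsetI)
  show "(\<lambda>y. a n y - b n y) \<in> smash (X n) (pt n)" for n
    by (rule smash_diff[OF Gset_smash[OF a] Gset_smash[OF b]])
  show "smash_map (phi n m) (pt m) (\<lambda>y. a n y - b n y) = (\<lambda>y. a m y - b m y)" if "m \<le> n" for n m
    using smash_map_diff[OF smash_finite[OF Gset_smash[OF a]] smash_finite[OF Gset_smash[OF b]],
        of "phi n m" "pt m"] Gset_compatible[OF a that] Gset_compatible[OF b that]
    by (simp add: fun_eq_iff)
qed

lemma Gmap_in_Gset:
  assumes h: "additive h" and a: "a \<in> Gset X pt phi"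
  shows "Gmap h a \<in> Gset X pt phi"
  unfolding Gmap_def
proof (rule GsetI)
  show "(\<lambda>y. h (a n y)) \<in> smash (X n) (pt n)" for n
    by (rule smash_additive_comp[OF h Gset_smash[OF a]])
  show "smash_map (phi n m) (pt m) (\<lambda>y. h (a n y)) = (\<lambda>y. h (a m y))" if "m \<le> n" for n m
    using additive_smash_map[OF h smash_finite[OF Gset_smash[OF a]], of "phi n m" "pt m", symmetric]
      Gset_compatible[OF a that]
    by (simp add: fun_eq_iff)
qed

lemma Gmap_diff: "additive h \<Longrightarrow> Gmap h (\<lambda>n y. a n y - b n y) = (\<lambda>n y. Gmap h a n y - Gmap h b n y)"
  unfolding Gmap_def by (simp add: additive_diff)

lemma inj_on_Gmap: "inj f \<Longrightarrow> inj_on (Gmap f) A"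
  unfolding Gmap_def by (rule inj_onI) (metis ext injD)

lemma Gset_lift:
  assumes f: "additive f" "inj f" and b: "b \<in> Gset X pt phi" and r: "\<And>n y. b n y \<in> range f"
  shows "\<exists>a\<in>Gset X pt phi. Gmap f a = b"
proof -
  define a where "a n y = inv f (b n y)" for n y
  have fa: "f (a n y) = b n y" for n y
    unfolding a_def using r by (simp add: f_inv_into_f)
  have a0: "a n y \<noteq> 0 \<longleftrightarrow> b n y \<noteq> 0" for n y
    using fa additive_0[OF f(1)] f(2) by (metis injD)
  have a_smash: "a n \<in> smash (X n) (pt n)" for n
    by (rule smash_support_subset[OF Gset_smash[OF b] Gset_smash[OF b]]) (simp add: a0)
  have "smash_map (phi n m) (pt m) (a n) = a m" if "m \<le> n" for n m
  proof
    fix t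
    have "f (smash_map (phi n m) (pt m) (a n) t) = smash_map (phi n m) (pt m) (b n) t"
      using additive_smash_map[OF f(1) smash_finite[OF a_smash]] fa by simp
    also have "\<dots> = f (a m t)"
      using Gset_compatible[OF b that] fa by simp
    finally show "smash_map (phi n m) (pt m) (a n) t = a m t"
      using f(2) by (simp add: inj_eq)
  qed
  then have "a \<in> Gset X pt phi"
    using a_smash by (intro GsetI)
  moreover have "Gmap f a = b"
    unfolding Gmap_def using fa by simp
  ultimately show ?thesis by blast
qed

lemma exact_at_Gmap:
  assumes f: "additive f" "inj f" and g: "additive g" and ex: "{b. g b = 0} = range f"
  shows "exact_at (Gset X pt phi) (Gset X pt phi) (\<lambda>n y. 0) (Gmap f) (Gmap g)"
  unfolding exact_at_def
proof (intro equalityI subsetI)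
  fix b assume "b \<in> {b \<in> Gset X pt phi. Gmap g b = (\<lambda>n y. 0)}"
  then have b: "b \<in> Gset X pt phi" and "g (b n y) = 0" for n y
    unfolding Gmap_def by (auto dest!: fun_cong)
  then have "b n y \<in> range f" for n y
    using ex by blast
  then show "b \<in> Gmap f ` Gset X pt phi"
    using Gset_lift[OF f b] by blast
next
  fix b assume "b \<in> Gmap f ` Gset X pt phi"
  then obtain a where a: "a \<in> Gset X pt phi" "b = Gmap f a" by blast
  have "g (f x) = 0" for x
    using ex by blast
  then show "b \<in> {b \<in> Gset X pt phi. Gmap g b = (\<lambda>n y. 0)}"
    using a Gmap_in_Gset[OF f(1) a(1)] unfolding Gmap_def by simp
qed

definition fun_subgroup :: "('i \<Rightarrow> 'j \<Rightarrow> 'a::ab_group_add) set \<Rightarrow> bool" where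
  "fun_subgroup K \<longleftrightarrow> (\<lambda>n y. 0) \<in> K \<and> (\<forall>a\<in>K. \<forall>b\<in>K. (\<lambda>n y. a n y - b n y) \<in> K)"

lemma fun_subgroup_0: "fun_subgroup K \<Longrightarrow> (\<lambda>n y. 0) \<in> K"
  unfolding fun_subgroup_def by blast

lemma fun_subgroup_diff: "fun_subgroup K \<Longrightarrow> a \<in> K \<Longrightarrow> b \<in> K \<Longrightarrow> (\<lambda>n y. a n y - b n y) \<in> K"
  unfolding fun_subgroup_def by blast

lemma fun_subgroup_add:
  assumes K: "fun_subgroup K" and "a \<in> K" "b \<in> K"
  shows "(\<lambda>n y. a n y + b n y) \<in> K"
proof -
  have "(\<lambda>n y. 0 - b n y) \<in> K"
    using fun_subgroup_diff[OF K fun_subgroup_0[OF K] assms(3)] .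
  from fun_subgroup_diff[OF K assms(2) this] show ?thesis by simp
qed

lemma mem_coset_iff: "u \<in> coset K g \<longleftrightarrow> (\<lambda>n y. u n y - g n y) \<in> K"
proof
  assume "u \<in> coset K g"
  then obtain k where "k \<in> K" "u = (\<lambda>n y. g n y + k n y)"
    unfolding coset_def by blast
  then show "(\<lambda>n y. u n y - g n y) \<in> K" by simp
next
  assume "(\<lambda>n y. u n y - g n y) \<in> K"
  then show "u \<in> coset K g"
    unfolding coset_def mem_Collect_eq by (intro exI[of _ "\<lambda>n y. u n y - g n y"]) simp
qed

lemma coset_zero: "coset K (\<lambda>n y. 0) = K"
  unfolding coset_def by simp

lemma coset_subset:
  assumes K: "fun_subgroup K" and d: "(\<lambda>n y. x n y - z n y) \<in> K"
  shows "coset K x \<subseteq> coset K z"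
proof
  fix u assume "u \<in> coset K x"
  then have "(\<lambda>n y. u n y - x n y) \<in> K"
    unfolding mem_coset_iff .
  from fun_subgroup_add[OF K this d] show "u \<in> coset K z"
    unfolding mem_coset_iff by simp
qed

lemma coset_eq_iff:
  assumes K: "fun_subgroup K"
  shows "coset K x = coset K z \<longleftrightarrow> (\<lambda>n y. x n y - z n y) \<in> K"
proof
  assume e: "coset K x = coset K z"
  have "z \<in> coset K x"
    unfolding e mem_coset_iff using fun_subgroup_0[OF K] by simp
  then have "(\<lambda>n y. z n y - x n y) \<in> K"
    unfolding mem_coset_iff .
  from fun_subgroup_diff[OF K fun_subgroup_0[OF K] this] show "(\<lambda>n y. x n y - z n y) \<in> K"
    by simp
next
  assume d: "(\<lambda>n y. x n y - z n y) \<in> K"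
  have "(\<lambda>n y. z n y - x n y) \<in> K"
    using fun_subgroup_diff[OF K fun_subgroup_0[OF K] d] by simp
  then show "coset K x = coset K z"
    using coset_subset[OF K d] coset_subset[OF K] by blast
qed

lemma rho_diff:
  assumes "finite {x. v x \<noteq> 0}" "finite {x. w x \<noteq> 0}"
  shows "rho pt (\<lambda>x. v x - w x) = (\<lambda>n y. rho pt v n y - rho pt w n y)"
  by (intro ext) (simp add: rho_def smash_map_diff[OF assms])

lemma rho_Gmap:
  assumes "additive h" "finite {x. w x \<noteq> 0}"
  shows "rho pt (\<lambda>x. h (w x)) = Gmap h (rho pt w)"
  by (intro ext) (simp add: rho_def Gmap_def additive_smash_map[OF assms])

lemma Kset_subgroup: "fun_subgroup (Kset X pt phi :: (nat \<Rightarrow> 'x \<Rightarrow> 'a::ab_group_add) set)"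
  unfolding fun_subgroup_def Kset_def
proof (intro conjI ballI)
  have "rho pt (\<lambda>x. 0) = (\<lambda>n y. 0)"
    by (simp add: rho_def smash_map_def fun_eq_iff)
  moreover have "(\<lambda>x. 0) \<in> smash (limX X phi) pt"
    by (rule smash_zero)
  ultimately show "(\<lambda>n y. 0) \<in> rho pt ` smash (limX X phi) pt"
    by (rule image_eqI[OF sym])
next
  fix a b :: "nat \<Rightarrow> 'x \<Rightarrow> 'a"
  assume "a \<in> rho pt ` smash (limX X phi) pt" "b \<in> rho pt ` smash (limX X phi) pt"
  then obtain v w where v: "v \<in> smash (limX X phi) pt" "a = rho pt v"
    and w: "w \<in> smash (limX X phi) pt" "b = rho pt w" by blast
  have "(\<lambda>n y. a n y - b n y) = rho pt (\<lambda>x. v x - w x)"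
    using rho_diff[OF smash_finite[OF v(1)] smash_finite[OF w(1)]] v(2) w(2) by simp
  then show "(\<lambda>n y. a n y - b n y) \<in> rho pt ` smash (limX X phi) pt"
    by (rule image_eqI[OF _ smash_diff[OF v(1) w(1)]])
qed

lemma Kset_Gmap:
  assumes h: "additive h" and k: "k \<in> Kset X pt phi"
  shows "Gmap h k \<in> Kset X pt phi"
proof -
  obtain w where w: "w \<in> smash (limX X phi) pt" "k = rho pt w"
    using k unfolding Kset_def by blast
  have "Gmap h k = rho pt (\<lambda>x. h (w x))"
    using rho_Gmap[OF h smash_finite[OF w(1)]] w(2) by simp
  then show ?thesis
    unfolding Kset_def by (rule image_eqI[OF _ smash_additive_comp[OF h w(1)]])
qed

lemma Hmap_coset:
  assumes h: "additive h"
  shows "Hmap X pt phi h (coset (Kset X pt phi) g) = coset (Kset X pt phi) (Gmap h g)"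
proof -
  let ?K = "Kset X pt phi"
  let ?g = "SOME g'. g' \<in> coset ?K g"
  have "?g \<in> coset ?K g"
    by (rule someI[of _ g]) (simp add: mem_coset_iff fun_subgroup_0[OF Kset_subgroup])
  then have "(\<lambda>n y. ?g n y - g n y) \<in> ?K"
    unfolding mem_coset_iff .
  then have "Gmap h (\<lambda>n y. ?g n y - g n y) \<in> ?K"
    by (rule Kset_Gmap[OF h])
  then show ?thesis
    unfolding Hmap_def coset_eq_iff[OF Kset_subgroup] Gmap_diff[OF h] .
qed

lemma Hmap_image:
  assumes "additive h"
  shows "Hmap X pt phi h ` Hset X pt phi = coset (Kset X pt phi) ` Gmap h ` Gset X pt phi"
  unfolding Hset_def image_image Hmap_coset[OF assms] ..

section \<open>Limits of towers of sets\<close>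

lemma limX_eventually_distinct:
  assumes x: "x \<in> limX X phi" and y: "y \<in> limX X phi" and "x \<noteq> y"
  shows "eventually (\<lambda>n. x n \<noteq> y n) sequentially"
proof -
  obtain k where k: "x k \<noteq> y k"
    using assms(3) unfolding fun_eq_iff by blast
  have "x n \<noteq> y n" if "k \<le> n" for n
  proof
    assume "x n = y n"
    moreover have "phi n k (x n) = x k" "phi n k (y n) = y k"
      using x y that by (simp_all add: limX_def)
    ultimately show False
      using k by simp
  qed
  then show ?thesis
    unfolding eventually_sequentially by blast
qed

lemma limX_inj_on_level:
  assumes "finite S" "S \<subseteq> limX X phi"
  shows "\<exists>N. inj_on (\<lambda>x. x N) S"
proof -
  have "eventually (\<lambda>n. fst p \<noteq> snd p \<longrightarrow> fst p n \<noteq> snd p n) sequentially" if "p \<in> S \<times> S" for p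
  proof (cases "fst p = snd p")
    case False
    have "fst p \<in> limX X phi" "snd p \<in> limX X phi"
      using that assms(2) by auto
    from limX_eventually_distinct[OF this False] show ?thesis
      by (rule eventually_mono) simp
  qed simp
  then have "eventually (\<lambda>n. \<forall>p\<in>S \<times> S. fst p \<noteq> snd p \<longrightarrow> fst p n \<noteq> snd p n) sequentially"
    using assms(1) by (intro eventually_ball_finite) auto
  then obtain N where N: "\<forall>p\<in>S \<times> S. fst p \<noteq> snd p \<longrightarrow> fst p N \<noteq> snd p N"
    unfolding eventually_sequentially by blast
  have "x N \<noteq> y N" if "x \<in> S" "y \<in> S" "x \<noteq> y" for x y
    using bspec[OF N, of "(x, y)"] that by simp
  then show ?thesis
    unfolding inj_on_def by blast
qed

lemma images_antimono:
  assumes maps: "\<And>n m v. m \<le> n \<Longrightarrow> v \<in> L n \<Longrightarrow> T n m v \<in> L m"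
    and comp: "\<And>n m k v. k \<le> m \<Longrightarrow> m \<le> n \<Longrightarrow> v \<in> L n \<Longrightarrow> T m k (T n m v) = T n k v"
    and "n \<le> s" "s \<le> r"
  shows "T r n ` L r \<subseteq> T s n ` L s"
proof
  fix x assume "x \<in> T r n ` L r"
  then obtain v where "v \<in> L r" "x = T r n v" by blast
  then show "x \<in> T s n ` L s"
    using comp[OF assms(3,4)] maps[OF assms(4)] by (metis image_eqI)
qed

lemma compatible_if_successive_compatible:
  assumes id: "\<And>n v. v \<in> L n \<Longrightarrow> T n n v = v"
    and comp: "\<And>n m k v. k \<le> m \<Longrightarrow> m \<le> n \<Longrightarrow> v \<in> L n \<Longrightarrow> T m k (T n m v) = T n k v"
    and e: "\<And>n. e n \<in> L n" "\<And>n. T (Suc n) n (e (Suc n)) = e n" and "m \<le> n"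
  shows "T n m (e n) = e m"
  using \<open>m \<le> n\<close>
proof (induction n rule: dec_induct)
  case base
  show ?case by (rule id[OF e(1)])
next
  case (step n)
  have "T (Suc n) m (e (Suc n)) = T n m (T (Suc n) n (e (Suc n)))"
    using comp[of m n "Suc n"] step.hyps e(1) by simp
  then show ?case
    using e(2) step.IH by simp
qed

lemma stable_images_imp_limit_nonempty:
  fixes L :: "nat \<Rightarrow> 'v set" and T :: "nat \<Rightarrow> nat \<Rightarrow> 'v \<Rightarrow> 'v"
  assumes maps: "\<And>n m v. m \<le> n \<Longrightarrow> v \<in> L n \<Longrightarrow> T n m v \<in> L m"
    and id: "\<And>n v. v \<in> L n \<Longrightarrow> T n n v = v"
    and comp: "\<And>n m k v. k \<le> m \<Longrightarrow> m \<le> n \<Longrightarrow> v \<in> L n \<Longrightarrow> T m k (T n m v) = T n k v"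
    and nonempty: "\<And>n. L n \<noteq> {}"
    and stable: "\<And>n. \<exists>s\<ge>n. \<forall>r\<ge>s. T s n ` L s \<subseteq> T r n ` L r"
  shows "\<exists>e. (\<forall>n. e n \<in> L n) \<and> (\<forall>n m. m \<le> n \<longrightarrow> T n m (e n) = e m)"
proof -
  obtain \<sigma> where \<sigma>: "\<And>n. n \<le> \<sigma> n" "\<And>n r. \<sigma> n \<le> r \<Longrightarrow> T (\<sigma> n) n ` L (\<sigma> n) \<subseteq> T r n ` L r"
    using stable by metis
  define S where "S n = T (\<sigma> n) n ` L (\<sigma> n)" for n
  have S_lift: "\<exists>z. z \<in> S (Suc n) \<and> T (Suc n) n z = x" if "x \<in> S n" for n x
  proof -
    let ?r = "max (\<sigma> n) (\<sigma> (Suc n))"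
    have "x \<in> T ?r n ` L ?r"
      using that \<sigma>(2)[of n ?r] unfolding S_def by auto
    then obtain v where v: "v \<in> L ?r" "x = T ?r n v" by blast
    have "T ?r (Suc n) v \<in> S (Suc n)"
      using images_antimono[where L = L and T = T, OF maps comp \<sigma>(1)[of "Suc n"] max.cobounded2] v(1)
      unfolding S_def by blast
    moreover have "T (Suc n) n (T ?r (Suc n) v) = x"
      using comp[of n "Suc n" ?r v] \<sigma>(1)[of "Suc n"] v by simp
    ultimately show ?thesis by blast
  qed
  have "\<exists>x. x \<in> S 0"
    using nonempty[of "\<sigma> 0"] unfolding S_def by blast
  from dependent_nat_choice[where P = "\<lambda>n x. x \<in> S n" and Q = "\<lambda>n x z. T (Suc n) n z = x",
      OF this S_lift]
  obtain e where e: "\<And>n. e n \<in> S n" "\<And>n. T (Suc n) n (e (Suc n)) = e n" by blast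
  have eL: "e n \<in> L n" for n
  proof -
    obtain v where "v \<in> L (\<sigma> n)" "e n = T (\<sigma> n) n v"
      using e(1)[of n] unfolding S_def by blast
    then show ?thesis
      using maps[OF \<sigma>(1)] by simp
  qed
  with compatible_if_successive_compatible[where L = L and T = T, OF id comp eL e(2)] show ?thesis by blast
qed

section \<open>Towers of pointed sets\<close>

context
  fixes X :: "nat \<Rightarrow> 'x set" and pt :: "nat \<Rightarrow> 'x" and phi :: "nat \<Rightarrow> nat \<Rightarrow> 'x \<Rightarrow> 'x"
  assumes tower: "tower X pt phi"
begin

lemma tower_map_in: "m \<le> n \<Longrightarrow> x \<in> X n \<Longrightarrow> phi n m x \<in> X m"
  using tower unfolding tower_def by blast

lemma tower_map_pt: "m \<le> n \<Longrightarrow> phi n m (pt n) = pt m"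
  using tower unfolding tower_def by blast

lemma tower_map_id: "x \<in> X n \<Longrightarrow> phi n n x = x"
  using tower unfolding tower_def by blast

lemma tower_map_comp: "k \<le> m \<Longrightarrow> m \<le> n \<Longrightarrow> x \<in> X n \<Longrightarrow> phi m k (phi n m x) = phi n k x"
  using tower unfolding tower_def by blast

lemma pt_in_limX: "pt \<in> limX X phi"
  using tower unfolding tower_def limX_def by blast

lemma smash_bond_in_smash:
  assumes "m \<le> n" "v \<in> smash (X n) (pt n)"
  shows "smash_map (phi n m) (pt m) v \<in> smash (X m) (pt m)"
  by (rule smash_map_in_smash[OF smash_finite[OF assms(2)]])
    (use tower_map_in[OF assms(1)] smash_supportD[OF assms(2)] in blast)

lemma smash_bond_id:
  assumes "v \<in> smash (X n) (pt n)"
  shows "smash_map (phi n n) (pt n) v = v"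
proof (rule smash_map_id[OF smash_finite[OF assms]])
  show "v (pt n) = 0"
    using smash_supportD[OF assms] by blast
  show "phi n n s = s" if "v s \<noteq> 0" for s
    using tower_map_id smash_supportD[OF assms that] by blast
qed

lemma smash_bond_comp:
  assumes "k \<le> m" "m \<le> n" "v \<in> smash (X n) (pt n)"
  shows "smash_map (phi m k) (pt k) (smash_map (phi n m) (pt m) v) = smash_map (phi n k) (pt k) v"
proof (rule smash_map_comp[OF smash_finite[OF assms(3)]])
  show "phi m k (pt m) = pt k"
    using tower_map_pt[OF assms(1)] .
  show "phi m k (phi n m s) = phi n k s" if "v s \<noteq> 0" for s
    using tower_map_comp[OF assms(1,2)] smash_supportD[OF assms(3) that] by blast
qed

lemma rho_in_Gset:
  assumes w: "w \<in> smash (limX X phi) pt"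
  shows "rho pt w \<in> Gset X pt phi"
proof (rule GsetI)
  have lim: "s n \<in> X n" "m \<le> n \<Longrightarrow> phi n m (s n) = s m" if "w s \<noteq> 0" for s n m
    using smash_supportD[OF w, of s] that unfolding limX_def by blast+
  show "rho pt w n \<in> smash (X n) (pt n)" for n
    unfolding rho_def by (rule smash_map_in_smash[OF smash_finite[OF w]]) (rule lim(1))
  show "smash_map (phi n m) (pt m) (rho pt w n) = rho pt w m" if "m \<le> n" for n m
    unfolding rho_def
    by (rule smash_map_comp[OF smash_finite[OF w]]) (use lim(2) that tower_map_pt in auto)
qed

lemma Kset_subset_Gset: "Kset X pt phi \<subseteq> Gset X pt phi"
  unfolding Kset_def using rho_in_Gset by blast

lemma rho_at_separating_level:
  assumes w: "w \<in> smash (limX X phi) pt"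
  shows "\<exists>N. \<forall>x. w x \<noteq> 0 \<longrightarrow> rho pt w N (x N) = w x"
proof -
  let ?F = "{s. w s \<noteq> 0}"
  have "finite (insert pt ?F)" "insert pt ?F \<subseteq> limX X phi"
    using smash_finite[OF w] pt_in_limX smash_supportD[OF w] by auto
  then obtain N where N: "inj_on (\<lambda>x. x N) (insert pt ?F)"
    using limX_inj_on_level by blast
  have "rho pt w N (x N) = w x" if x: "w x \<noteq> 0" for x
  proof -
    have "x N \<noteq> pt N"
      using inj_onD[OF N, of x pt] x smash_supportD[OF w, of x] by auto
    moreover have "{s \<in> ?F. s N = x N} = {x}"
      using inj_onD[OF N] x by auto
    ultimately show ?thesis
      unfolding rho_def smash_map_eq_sum[OF smash_finite[OF w] order_refl] by simp
  qed
  then show ?thesis by blast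
qed

lemma smash_limX_lift:
  assumes h: "additive h" and w: "w \<in> smash (limX X phi) pt"
    and r: "\<And>n y. rho pt w n y \<in> range h"
  obtains w' where "w' \<in> smash (limX X phi) pt" "(\<lambda>x. h (w' x)) = w"
proof -
  obtain N where N: "\<And>x. w x \<noteq> 0 \<Longrightarrow> rho pt w N (x N) = w x"
    using rho_at_separating_level[OF w] by blast
  define w' where "w' x = (if w x = 0 then 0 else inv h (w x))" for x
  have hw': "h (w' x) = w x" for x
  proof (cases "w x = 0")
    case False
    then have "w x \<in> range h"
      using N r by metis
    then show ?thesis
      unfolding w'_def using False by (simp add: f_inv_into_f)
  qed (simp add: w'_def additive_0[OF h])
  have "w' \<in> smash (limX X phi) pt"
    by (rule smash_support_subset[OF w w]) (simp add: w'_def split: if_splits)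
  moreover have "(\<lambda>x. h (w' x)) = w"
    using hw' by simp
  ultimately show ?thesis by (rule that)
qed

lemma Kset_lift:
  assumes h: "additive h" and k: "k \<in> Kset X pt phi" and r: "\<And>n y. k n y \<in> range h"
  obtains k' where "k' \<in> Kset X pt phi" "Gmap h k' = k"
proof -
  obtain w where w: "w \<in> smash (limX X phi) pt" "k = rho pt w"
    using k unfolding Kset_def by blast
  obtain w' where w': "w' \<in> smash (limX X phi) pt" "(\<lambda>x. h (w' x)) = w"
    by (rule smash_limX_lift[OF h w(1) r[unfolded w(2)]])
  have "rho pt w' \<in> Kset X pt phi"
    unfolding Kset_def using w'(1) by (rule imageI)
  moreover have "Gmap h (rho pt w') = k"
    using rho_Gmap[OF h smash_finite[OF w'(1)]] w'(2) w(2) by simp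
  ultimately show ?thesis by (rule that)
qed

lemma inj_on_Hmap:
  assumes f: "additive f" "inj f"
  shows "inj_on (Hmap X pt phi f) (Hset X pt phi)"
proof (rule inj_onI)
  let ?K = "Kset X pt phi"
  fix c1 c2 assume "c1 \<in> Hset X pt phi" "c2 \<in> Hset X pt phi"
    and eq: "Hmap X pt phi f c1 = Hmap X pt phi f c2"
  then obtain a1 a2 where a: "c1 = coset ?K a1" "c2 = coset ?K a2"
    unfolding Hset_def by blast
  let ?d = "\<lambda>n y. a1 n y - a2 n y"
  have "Gmap f ?d \<in> ?K"
    using eq unfolding a Hmap_coset[OF f(1)] coset_eq_iff[OF Kset_subgroup] Gmap_diff[OF f(1)] .
  moreover have "Gmap f ?d n y \<in> range f" for n y
    unfolding Gmap_def by blast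
  ultimately obtain k where k: "k \<in> ?K" "Gmap f k = Gmap f ?d"
    by (rule Kset_lift[OF f(1)])
  then have "k = ?d"
    using inj_on_Gmap[OF f(2)] by (auto dest: inj_onD)
  then show "c1 = c2"
    using k(1) unfolding a coset_eq_iff[OF Kset_subgroup] by simp
qed

lemma exact_at_Hmap:
  assumes f: "additive f" "inj f" and g: "additive g" and ex: "{b. g b = 0} = range f"
  shows "exact_at (Hset X pt phi) (Hset X pt phi) (Kset X pt phi) (Hmap X pt phi f) (Hmap X pt phi g)"
  unfolding exact_at_def
proof (intro equalityI subsetI)
  fix c assume "c \<in> {c \<in> Hset X pt phi. Hmap X pt phi g c = Kset X pt phi}"
  then obtain b where b: "b \<in> Gset X pt phi" and c: "c = coset (Kset X pt phi) b"
    and gc: "Hmap X pt phi g c = Kset X pt phi"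
    unfolding Hset_def by blast
  have "Gmap g b \<in> Kset X pt phi"
    using gc coset_eq_iff[OF Kset_subgroup, where x = "Gmap g b" and z = "\<lambda>n y. 0"]
    by (simp add: c Hmap_coset[OF g] coset_zero)
  moreover have "Gmap g b n y \<in> range g" for n y
    unfolding Gmap_def by blast
  ultimately obtain k where k: "k \<in> Kset X pt phi" "Gmap g k = Gmap g b"
    by (rule Kset_lift[OF g])
  let ?b' = "\<lambda>n y. b n y - k n y"
  have "?b' \<in> Gset X pt phi"
    using Gset_diff[OF b] Kset_subset_Gset k(1) by blast
  moreover have "Gmap g ?b' = (\<lambda>n y. 0)"
    unfolding Gmap_diff[OF g] k(2) by simp
  ultimately obtain a where a: "a \<in> Gset X pt phi" "?b' = Gmap f a"
    using exact_at_Gmap[OF f g ex] unfolding exact_at_def by blast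
  have "c = coset (Kset X pt phi) ?b'"
    unfolding c coset_eq_iff[OF Kset_subgroup] using k(1) by simp
  then show "c \<in> Hmap X pt phi f ` Hset X pt phi"
    unfolding Hmap_image[OF f(1)] a(2) using a(1) by blast
next
  fix c assume "c \<in> Hmap X pt phi f ` Hset X pt phi"
  then obtain a where a: "a \<in> Gset X pt phi" "c = coset (Kset X pt phi) (Gmap f a)"
    unfolding Hmap_image[OF f(1)] by blast
  have "g (f x) = 0" for x
    using ex by blast
  then have "Gmap g (Gmap f a) = (\<lambda>n y. 0)"
    by (simp add: Gmap_def)
  then show "c \<in> {c \<in> Hset X pt phi. Hmap X pt phi g c = Kset X pt phi}"
    using a Gmap_in_Gset[OF f(1) a(1)] by (simp add: Hmap_coset[OF g] coset_zero Hset_def)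
qed

lemma smash_lifts_bond:
  assumes g: "additive g" and c: "c \<in> Gset X pt phi" and "m \<le> n"
    and b: "b \<in> smash_lifts (X n) (pt n) g (c n)"
  shows "smash_map (phi n m) (pt m) b \<in> smash_lifts (X m) (pt m) g (c m)"
proof -
  have "smash_map (phi n m) (pt m) b \<in> smash_lifts (X m) (pt m) g (smash_map (phi n m) (pt m) (c n))"
    by (rule smash_map_lifts[OF g b]) (rule tower_map_in[OF \<open>m \<le> n\<close>])
  then show ?thesis
    using Gset_compatible[OF c \<open>m \<le> n\<close>] by simp
qed

text \<open>
  A lift b at level s differs from the image of a lift b0 at level r by some f \<circ> a; the image of a
  at level n lies over phi s n ` X s = phi r n ` X r, so it comes from some a' at level r, and
  b0 + f \<circ> a' is a lift at level r with the same image at level n as b.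
\<close>

lemma smash_lifts_image_stable:
  assumes f: "additive f" "inj f" and g: "additive g" and ex: "{b. g b = 0} = range f"
    and c: "c \<in> Gset X pt phi" and ns: "n \<le> s" and sr: "s \<le> r"
    and im: "phi s n ` X s = phi r n ` X r" and ne: "smash_lifts (X r) (pt r) g (c r) \<noteq> {}"
  shows "smash_map (phi s n) (pt n) ` smash_lifts (X s) (pt s) g (c s)
      \<subseteq> smash_map (phi r n) (pt n) ` smash_lifts (X r) (pt r) g (c r)"
proof
  let ?L = "\<lambda>k. smash_lifts (X k) (pt k) g (c k)"
  let ?T = "\<lambda>k l. smash_map (phi k l) (pt l)"
  have smash: "b \<in> smash (X k) (pt k)" if "b \<in> ?L k" for b k
    using that unfolding smash_lifts_def by blast
  fix x assume "x \<in> ?T s n ` ?L s"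
  then obtain b where b: "b \<in> ?L s" "x = ?T s n b" by blast
  obtain b0 where b0: "b0 \<in> ?L r"
    using ne by blast
  obtain a where a: "a \<in> smash (X s) (pt s)" "b = (\<lambda>y. ?T r s b0 y + f (a y))"
    by (rule smash_lifts_diff[OF f g ex b(1) smash_lifts_bond[OF g c sr b0]])
  have "t \<in> phi r n ` X r" if "?T s n a t \<noteq> 0" for t
    using smash_map_support[OF that] smash_supportD[OF a(1)] im by blast
  then have "\<exists>a'\<in>smash (X r) (pt r). ?T r n a' = ?T s n a"
    by (rule smash_map_lift[where f = "phi r n",
          OF tower_map_pt[OF order_trans[OF ns sr]] smash_bond_in_smash[OF ns a(1)]])
  then obtain a' where a': "a' \<in> smash (X r) (pt r)" "?T r n a' = ?T s n a"
    by blast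
  have gf: "g (f y) = 0" for y
    using ex by blast
  have "(\<lambda>y. b0 y + f (a' y)) \<in> ?L r"
    by (rule smash_lifts_translate[OF f(1) gf g b0 a'(1)])
  moreover have "?T r n (\<lambda>y. b0 y + f (a' y)) = x"
  proof -
    have "?T r n (\<lambda>y. b0 y + f (a' y)) = (\<lambda>t. ?T r n b0 t + f (?T r n a' t))"
      by (rule smash_map_add_additive[OF f(1) smash_finite[OF smash[OF b0]] smash_finite[OF a'(1)]])
    also have "\<dots> = (\<lambda>t. ?T s n (?T r s b0) t + f (?T s n a t))"
      using smash_bond_comp[OF ns sr smash[OF b0]] a'(2) by simp
    also have "\<dots> = ?T s n b"
      unfolding a(2) by (rule smash_map_add_additive[OF f(1)
          smash_finite[OF smash_bond_in_smash[OF sr smash[OF b0]]] smash_finite[OF a(1)], symmetric])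
    finally show ?thesis
      using b(2) by simp
  qed
  ultimately show "x \<in> ?T r n ` ?L r"
    by blast
qed

lemma smash_lifts_stable_images:
  assumes ml: "mittag_leffler X phi" and f: "additive f" "inj f" and g: "additive g"
    and ex: "{b. g b = 0} = range f" and c: "c \<in> Gset X pt phi"
    and ne: "\<And>r. smash_lifts (X r) (pt r) g (c r) \<noteq> {}"
  shows "\<exists>s\<ge>n. \<forall>r\<ge>s. smash_map (phi s n) (pt n) ` smash_lifts (X s) (pt s) g (c s)
      \<subseteq> smash_map (phi r n) (pt n) ` smash_lifts (X r) (pt r) g (c r)"
proof -
  obtain s where s: "n \<le> s" "\<forall>r\<ge>s. phi s n ` X s = phi r n ` X r"
    using ml unfolding mittag_leffler_def by blast
  have "smash_map (phi s n) (pt n) ` smash_lifts (X s) (pt s) g (c s)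
      \<subseteq> smash_map (phi r n) (pt n) ` smash_lifts (X r) (pt r) g (c r)" if "s \<le> r" for r
    by (rule smash_lifts_image_stable[OF f g ex c s(1) that s(2)[rule_format, OF that] ne])
  then show ?thesis
    using s(1) by blast
qed

lemma Gset_lift_surj:
  assumes ml: "mittag_leffler X phi" and f: "additive f" "inj f" and g: "additive g"
    and ex: "{b. g b = 0} = range f" and sg: "surj g" and c: "c \<in> Gset X pt phi"
  shows "\<exists>b\<in>Gset X pt phi. Gmap g b = c"
proof -
  let ?L = "\<lambda>n. smash_lifts (X n) (pt n) g (c n)"
  let ?T = "\<lambda>n m. smash_map (phi n m) (pt m)"
  have smash: "b \<in> smash (X n) (pt n)" if "b \<in> ?L n" for b n
    using that unfolding smash_lifts_def by blast
  have ne: "?L n \<noteq> {}" for n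
    by (rule smash_lifts_nonempty[OF g sg Gset_smash[OF c]])
  have "\<exists>e. (\<forall>n. e n \<in> ?L n) \<and> (\<forall>n m. m \<le> n \<longrightarrow> ?T n m (e n) = e m)"
  proof (rule stable_images_imp_limit_nonempty[where L = ?L and T = ?T])
    show "?T n m v \<in> ?L m" if "m \<le> n" "v \<in> ?L n" for n m v
      by (rule smash_lifts_bond[OF g c that])
    show "?T n n v = v" if "v \<in> ?L n" for n v
      by (rule smash_bond_id[OF smash[OF that]])
    show "?T m k (?T n m v) = ?T n k v" if "k \<le> m" "m \<le> n" "v \<in> ?L n" for n m k v
      by (rule smash_bond_comp[OF that(1,2) smash[OF that(3)]])
    show "?L n \<noteq> {}" for n
      by (rule ne)
    show "\<exists>s\<ge>n. \<forall>r\<ge>s. ?T s n ` ?L s \<subseteq> ?T r n ` ?L r" for n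
      by (rule smash_lifts_stable_images[OF ml f g ex c ne])
  qed
  then obtain e where e: "\<And>n. e n \<in> ?L n" "\<And>n m. m \<le> n \<Longrightarrow> ?T n m (e n) = e m"
    by blast
  have "e \<in> Gset X pt phi"
    using e smash by (intro GsetI) blast+
  moreover have "Gmap g e = c"
    using e(1) unfolding Gmap_def smash_lifts_def by auto
  ultimately show ?thesis by blast
qed

lemma Gset_surj:
  assumes ml: "mittag_leffler X phi" and f: "additive f" "inj f" and g: "additive g"
    and ex: "{b. g b = 0} = range f" and sg: "surj g"
  shows "Gmap g ` Gset X pt phi = Gset X pt phi"
  using Gmap_in_Gset[OF g] Gset_lift_surj[OF ml f g ex sg] by blast

lemma Hset_surj:
  assumes ml: "mittag_leffler X phi" and f: "additive f" "inj f" and g: "additive g"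
    and ex: "{b. g b = 0} = range f" and sg: "surj g"
  shows "Hmap X pt phi g ` Hset X pt phi = Hset X pt phi"
proof -
  have "Hmap X pt phi g ` Hset X pt phi = coset (Kset X pt phi) ` Gmap g ` Gset X pt phi"
    by (rule Hmap_image[OF g])
  also have "\<dots> = Hset X pt phi"
    unfolding Gset_surj[OF ml f g ex sg] Hset_def ..
  finally show ?thesis .
qed

end

theorem mainTheorem12:
  fixes X :: "nat \<Rightarrow> 'x set" and pt :: "nat \<Rightarrow> 'x" and phi :: "nat \<Rightarrow> nat \<Rightarrow> 'x \<Rightarrow> 'x"
  assumes "tower X pt phi"
  shows
   "(\<forall>(f :: 'a::ab_group_add \<Rightarrow> 'b::ab_group_add) (g :: 'b \<Rightarrow> 'c::ab_group_add).
       additive f \<and> additive g \<and> inj f \<and> {b. g b = 0} = range f \<longrightarrow>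
         inj_on (Gmap f) (Gset X pt phi :: (nat \<Rightarrow> 'x \<Rightarrow> 'a) set) \<and>
         exact_at (Gset X pt phi :: (nat \<Rightarrow> 'x \<Rightarrow> 'a) set) (Gset X pt phi) (\<lambda>n y. 0 :: 'c) (Gmap f) (Gmap g) \<and>
         inj_on (Hmap X pt phi f) (Hset X pt phi :: (nat \<Rightarrow> 'x \<Rightarrow> 'a) set set) \<and>
         exact_at (Hset X pt phi :: (nat \<Rightarrow> 'x \<Rightarrow> 'a) set set) (Hset X pt phi)
            (Kset X pt phi) (Hmap X pt phi f) (Hmap X pt phi g))
    \<and>
    (mittag_leffler X phi \<longrightarrow>
      (\<forall>(f :: 'a \<Rightarrow> 'b) (g :: 'b \<Rightarrow> 'c).
       additive f \<and> additive g \<and> inj f \<and> {b. g b = 0} = range f \<and> surj g \<longrightarrow>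
         inj_on (Gmap f) (Gset X pt phi :: (nat \<Rightarrow> 'x \<Rightarrow> 'a) set) \<and>
         exact_at (Gset X pt phi :: (nat \<Rightarrow> 'x \<Rightarrow> 'a) set) (Gset X pt phi) (\<lambda>n y. 0 :: 'c) (Gmap f) (Gmap g) \<and>
         Gmap g ` (Gset X pt phi :: (nat \<Rightarrow> 'x \<Rightarrow> 'b) set) = Gset X pt phi \<and>
         inj_on (Hmap X pt phi f) (Hset X pt phi :: (nat \<Rightarrow> 'x \<Rightarrow> 'a) set set) \<and>
         exact_at (Hset X pt phi :: (nat \<Rightarrow> 'x \<Rightarrow> 'a) set set) (Hset X pt phi)
            (Kset X pt phi) (Hmap X pt phi f) (Hmap X pt phi g) \<and>
         Hmap X pt phi g ` (Hset X pt phi :: (nat \<Rightarrow> 'x \<Rightarrow> 'b) set set) = Hset X pt phi))"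
  by (intro conjI allI impI; elim conjE;
      rule inj_on_Gmap exact_at_Gmap inj_on_Hmap[OF assms] exact_at_Hmap[OF assms]
        Gset_surj[OF assms] Hset_surj[OF assms]; assumption)

end
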